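(* Let $\alpha,\beta\in R$ with $\beta$ a long root and $(\alpha,\beta)=0$. Then there exist $\gamma,\gamma'\in R$ with $\gamma\notin\{\alpha,\beta\}$ such that $\alpha+\beta=\gamma+\gamma'$.
   Context: $R$ is the root system of a complex simple Lie algebra, with $(\cdot,\cdot)$ the invariant form induced by the Killing form; in the simply laced case all roots are long. *)

theory Defs
  imports "HOL-Analysis.Analysis"
begin

text \<open>A (crystallographic) root system in a Euclidean space, with the inner
  product of the space playing the role of the invariant form.\<close>
definition root_system :: "'a::euclidean_space set \<Rightarrow> bool" where
  "root_system R \<longleftrightarrow>
     finite R \<and> 0 \<notin> R \<and> span R = UNIV \<and>
     (\<forall>\<alpha>\<in>R. \<forall>\<beta>\<in>R. \<beta> - (2 * (\<beta> \<bullet> \<alpha>) / (\<alpha> \<bullet> \<alpha>)) *\<^sub>R \<alpha> \<in> R) \<and>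
     (\<forall>\<alpha>\<in>R. \<forall>\<beta>\<in>R. 2 * (\<beta> \<bullet> \<alpha>) / (\<alpha> \<bullet> \<alpha>) \<in> \<int>)"

definition reduced_root_system :: "'a::euclidean_space set \<Rightarrow> bool" where
  "reduced_root_system R \<longleftrightarrow> root_system R \<and>
     (\<forall>\<alpha>\<in>R. \<forall>c::real. c *\<^sub>R \<alpha> \<in> R \<longrightarrow> c = 1 \<or> c = -1)"

definition irreducible_root_system :: "'a::euclidean_space set \<Rightarrow> bool" where
  "irreducible_root_system R \<longleftrightarrow> root_system R \<and>
     \<not> (\<exists>R1 R2. R1 \<noteq> {} \<and> R2 \<noteq> {} \<and> R1 \<union> R2 = R \<and> R1 \<inter> R2 = {} \<and>
           (\<forall>a\<in>R1. \<forall>b\<in>R2. a \<bullet> b = 0))"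

definition simple_lie_root_system :: "'a::euclidean_space set \<Rightarrow> bool" where
  "simple_lie_root_system R \<longleftrightarrow> reduced_root_system R \<and> irreducible_root_system R"

definition long_root :: "'a::euclidean_space set \<Rightarrow> 'a \<Rightarrow> bool" where
  "long_root R \<beta> \<longleftrightarrow> \<beta> \<in> R \<and> (\<forall>\<alpha>\<in>R. \<alpha> \<bullet> \<alpha> \<le> \<beta> \<bullet> \<beta>)"

end

theory Submission
  imports Defs
begin

(*
  The idea is to find a root d with
  (d, \<alpha>) > 0 and (d, \<beta>) < 0. By the standard fact "if (x, y) > 0 and x \<noteq> y then
  x - y is a root" (valid in reduced root systems), both \<gamma> = \<alpha> - d and \<gamma>' = \<beta> + d
  are roots, and \<alpha> + \<beta> = \<gamma> + \<gamma>'. Clearly \<gamma> \<noteq> \<alpha>, and \<gamma> = \<beta> would make d = \<alpha> - \<beta>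
  a root strictly longer than the long root \<beta>.

  Irreducibility supplies a root non-orthogonal to
  both \<alpha> and \<beta> (the "non-orthogonality" relation links all roots); adjusting
  its signs by negation and by the reflection in \<beta> (which fixes \<alpha>) gives d.
*)

text \<open>The Cartan number of x with respect to y; the reflection in y maps
  x to x - cartan x y *R y.\<close>
definition cartan :: "'a::real_inner \<Rightarrow> 'a \<Rightarrow> real" where
  "cartan x y = 2 * (x \<bullet> y) / (y \<bullet> y)"

lemma root_reflection_mem:
  assumes "root_system R" "\<alpha> \<in> R" "\<beta> \<in> R"
  shows "\<beta> - cartan \<beta> \<alpha> *\<^sub>R \<alpha> \<in> R"
  using assms unfolding root_system_def cartan_def by blast

lemma cartan_Ints:
  assumes "root_system R" "\<alpha> \<in> R" "\<beta> \<in> R"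
  shows "cartan \<beta> \<alpha> \<in> \<int>"
  using assms unfolding root_system_def cartan_def by blast

lemma root_inner_self_pos: "root_system R \<Longrightarrow> \<alpha> \<in> R \<Longrightarrow> \<alpha> \<bullet> \<alpha> > 0"
  unfolding root_system_def by auto

lemma cartan_self: "x \<noteq> 0 \<Longrightarrow> cartan x x = 2"
  by (simp add: cartan_def)

text \<open>Root systems are symmetric: reflecting \<alpha> in itself gives -\<alpha>.\<close>
lemma root_uminus_mem:
  assumes "root_system R" "\<alpha> \<in> R"
  shows "- \<alpha> \<in> R"
proof -
  have "\<alpha> \<noteq> 0" using root_inner_self_pos[OF assms] by auto
  then have "\<alpha> - cartan \<alpha> \<alpha> *\<^sub>R \<alpha> = - \<alpha>" by (simp add: cartan_self scaleR_2)
  then show ?thesis using root_reflection_mem[OF assms assms(2)] by simp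
qed

text \<open>In a reduced root system, Cauchy-Schwarz is strict for two roots that are
  neither equal nor opposite, since equality would force proportionality.\<close>
lemma reduced_strict_cauchy_schwarz:
  assumes red: "reduced_root_system R" and x: "x \<in> R" and y: "y \<in> R"
    and "y \<noteq> x" "y \<noteq> - x"
  shows "\<bar>x \<bullet> y\<bar> < norm x * norm y"
proof (rule ccontr)
  assume "\<not> ?thesis"
  then have "\<bar>x \<bullet> y\<bar> = norm x * norm y" using Cauchy_Schwarz_ineq2[of x y] by linarith
  then have proportional: "norm x *\<^sub>R y = norm y *\<^sub>R x \<or> norm x *\<^sub>R y = - norm y *\<^sub>R x"
    by (rule norm_cauchy_schwarz_abs_eq[THEN iffD1])
  have "x \<noteq> 0" using red x unfolding reduced_root_system_def root_system_def by auto
  then have nx: "norm x \<noteq> 0" by simp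
  obtain c where yc: "y = c *\<^sub>R x"
    using proportional
  proof
    assume "norm x *\<^sub>R y = norm y *\<^sub>R x"
    then have "inverse (norm x) *\<^sub>R (norm x *\<^sub>R y) = inverse (norm x) *\<^sub>R (norm y *\<^sub>R x)"
      by simp
    then have "y = (norm y / norm x) *\<^sub>R x" using nx by (simp add: divide_inverse_commute)
    then show ?thesis using that by blast
  next
    assume "norm x *\<^sub>R y = - norm y *\<^sub>R x"
    then have "inverse (norm x) *\<^sub>R (norm x *\<^sub>R y) = inverse (norm x) *\<^sub>R (- norm y *\<^sub>R x)"
      by simp
    then have "y = (- norm y / norm x) *\<^sub>R x" using nx by (simp add: divide_inverse_commute)
    then show ?thesis using that by blast
  qed
  then have "c = 1 \<or> c = -1" using red x y unfolding reduced_root_system_def by blast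
  then show False using yc assms(4,5) by auto
qed

lemma cartan_product_lt_4:
  assumes red: "reduced_root_system R" and x: "x \<in> R" and y: "y \<in> R"
    and "y \<noteq> x" "y \<noteq> - x"
  shows "cartan x y * cartan y x < 4"
proof -
  have rs: "root_system R" using red reduced_root_system_def by blast
  have xx: "x \<bullet> x > 0" and yy: "y \<bullet> y > 0" using root_inner_self_pos[OF rs] x y by auto
  have "(x \<bullet> y)\<^sup>2 = \<bar>x \<bullet> y\<bar>\<^sup>2" by simp
  also have "\<dots> < (norm x * norm y)\<^sup>2"
    using reduced_strict_cauchy_schwarz[OF assms] by (intro power_strict_mono) auto
  also have "\<dots> = (x \<bullet> x) * (y \<bullet> y)" by (simp add: power_mult_distrib power2_norm_eq_inner)
  finally have cs: "(x \<bullet> y)\<^sup>2 < (x \<bullet> x) * (y \<bullet> y)" .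
  have "cartan x y * cartan y x = 4 * (x \<bullet> y)\<^sup>2 / ((x \<bullet> x) * (y \<bullet> y))"
    by (simp add: cartan_def inner_commute power2_eq_square)
  also have "\<dots> < 4" using cs xx yy by (simp add: field_simps)
  finally show ?thesis .
qed

text \<open>The standard fact: if two distinct roots form an acute angle, their
  difference is a root. One of the two Cartan numbers equals 1, and the
  corresponding reflection produces x - y or y - x.\<close>
lemma diff_root_mem:
  assumes red: "reduced_root_system R" and x: "x \<in> R" and y: "y \<in> R"
    and pos: "x \<bullet> y > 0" and ne: "x \<noteq> y"
  shows "x - y \<in> R"
proof -
  have rs: "root_system R" using red reduced_root_system_def by blast
  have xx: "x \<bullet> x > 0" and yy: "y \<bullet> y > 0" using root_inner_self_pos[OF rs] x y by auto
  have "y \<noteq> - x"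
  proof
    assume "y = - x"
    then have "x \<bullet> y = - (x \<bullet> x)" by simp
    then show False using pos xx by linarith
  qed
  then have lt4: "cartan x y * cartan y x < 4"
    using cartan_product_lt_4[OF red x y] ne by auto
  obtain k1 where k1: "cartan x y = of_int k1"
    using cartan_Ints[OF rs y x] by (auto elim: Ints_cases)
  obtain k2 where k2: "cartan y x = of_int k2"
    using cartan_Ints[OF rs x y] by (auto elim: Ints_cases)
  have "cartan x y > 0" "cartan y x > 0"
    using pos xx yy by (auto simp: cartan_def inner_commute)
  then have "k1 > 0" "k2 > 0" using k1 k2 by auto
  moreover have "k1 * k2 < 4" using lt4 k1 k2 by (simp flip: of_int_mult)
  moreover have "\<not> (k1 \<ge> 2 \<and> k2 \<ge> 2)"
  proof
    assume "k1 \<ge> 2 \<and> k2 \<ge> 2"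
    then have "2 * 2 \<le> k1 * k2" by (intro mult_mono) auto
    then show False using \<open>k1 * k2 < 4\<close> by simp
  qed
  ultimately have "k1 = 1 \<or> k2 = 1" by linarith
  then show ?thesis
  proof
    assume "k1 = 1"
    then have "x - cartan x y *\<^sub>R y = x - y" using k1 by simp
    then show ?thesis using root_reflection_mem[OF rs y x] by simp
  next
    assume "k2 = 1"
    then have "y - cartan y x *\<^sub>R x = y - x" using k2 by simp
    then have "y - x \<in> R" using root_reflection_mem[OF rs x y] by simp
    from root_uminus_mem[OF rs this] show ?thesis by simp
  qed
qed

text \<open>Propagation step: if y is non-orthogonal to \<alpha> and to u, and u is
  non-orthogonal to b, then some root is non-orthogonal to both \<alpha> and b
  (y itself, u itself, or the reflection of y in u).\<close>
lemma nonorthogonal_witness_step: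
  assumes rs: "root_system R" and u: "u \<in> R" and b: "b \<in> R" and y: "y \<in> R"
    and ya: "y \<bullet> \<alpha> \<noteq> 0" and yu: "y \<bullet> u \<noteq> 0" and ub: "u \<bullet> b \<noteq> 0"
  shows "\<exists>z\<in>R. z \<bullet> \<alpha> \<noteq> 0 \<and> z \<bullet> b \<noteq> 0"
proof (cases "y \<bullet> b = 0 \<and> u \<bullet> \<alpha> = 0")
  case True
  define z where "z = y - cartan y u *\<^sub>R u"
  have "cartan y u \<noteq> 0" using yu root_inner_self_pos[OF rs u] by (simp add: cartan_def)
  moreover have "z \<bullet> \<alpha> = y \<bullet> \<alpha>" and "z \<bullet> b = - cartan y u * (u \<bullet> b)"
    using True by (simp_all add: z_def inner_diff_left)
  ultimately have "z \<bullet> \<alpha> \<noteq> 0 \<and> z \<bullet> b \<noteq> 0" using ya ub by simp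
  then show ?thesis using root_reflection_mem[OF rs u y] unfolding z_def by blast
next
  case False
  then show ?thesis using y ya u ub by (auto simp: inner_commute)
qed

text \<open>In an irreducible root system any two roots are simultaneously
  non-orthogonal to a third root: the roots admitting such a common witness
  with \<alpha> are closed under non-orthogonality, hence form all of R.\<close>
lemma irreducible_common_nonorthogonal:
  assumes irr: "irreducible_root_system R" and a: "\<alpha> \<in> R" and b: "\<beta> \<in> R"
  shows "\<exists>y\<in>R. y \<bullet> \<alpha> \<noteq> 0 \<and> y \<bullet> \<beta> \<noteq> 0"
proof -
  have rs: "root_system R" using irr irreducible_root_system_def by blast
  define R1 where "R1 = {x\<in>R. \<exists>y\<in>R. y \<bullet> \<alpha> \<noteq> 0 \<and> y \<bullet> x \<noteq> 0}"
  have "\<alpha> \<bullet> \<alpha> \<noteq> 0" using root_inner_self_pos[OF rs a] by simp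
  then have "\<alpha> \<in> R1" using a unfolding R1_def by blast
  moreover have "\<forall>u\<in>R1. \<forall>v\<in>R - R1. u \<bullet> v = 0"
    using nonorthogonal_witness_step[OF rs] unfolding R1_def by blast
  moreover have "R1 \<union> (R - R1) = R" "R1 \<inter> (R - R1) = {}" unfolding R1_def by auto
  ultimately have "R - R1 = {}"
    using irr unfolding irreducible_root_system_def
    by (metis empty_iff)
  then show ?thesis using b unfolding R1_def by auto
qed

text \<open>For orthogonal roots \<alpha>, \<beta> with a common non-orthogonal root, there is a root
  acute to \<alpha> and obtuse to \<beta>: negation fixes the sign against \<alpha>, and the
  reflection in \<beta>, which fixes \<alpha>, flips the sign against \<beta>.\<close>
lemma acute_obtuse_root:
  assumes rs: "root_system R" and b: "\<beta> \<in> R" and ab: "\<alpha> \<bullet> \<beta> = 0"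
    and y: "y \<in> R" "y \<bullet> \<alpha> \<noteq> 0" "y \<bullet> \<beta> \<noteq> 0"
  shows "\<exists>d\<in>R. d \<bullet> \<alpha> > 0 \<and> d \<bullet> \<beta> < 0"
proof -
  obtain e where e: "e \<in> R" "e \<bullet> \<alpha> > 0" "e \<bullet> \<beta> \<noteq> 0"
  proof (cases "y \<bullet> \<alpha> > 0")
    case True
    then show ?thesis using that y by blast
  next
    case False
    then have "(- y) \<bullet> \<alpha> > 0" using y(2) by simp
    then show ?thesis using that root_uminus_mem[OF rs y(1)] y(3) by simp
  qed
  define s where "s = e - cartan e \<beta> *\<^sub>R \<beta>"
  have s_root: "s \<in> R" using root_reflection_mem[OF rs b e(1)] by (simp add: s_def)
  have s_alpha: "s \<bullet> \<alpha> = e \<bullet> \<alpha>"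
    using ab by (simp add: s_def inner_diff_left inner_commute[of \<beta> \<alpha>])
  have s_beta: "s \<bullet> \<beta> = - (e \<bullet> \<beta>)"
    using root_inner_self_pos[OF rs b] by (simp add: s_def cartan_def inner_diff_left)
  show ?thesis
  proof (cases "e \<bullet> \<beta> < 0")
    case True
    then show ?thesis using e by blast
  next
    case False
    then have "s \<bullet> \<beta> < 0" using s_beta e(3) by simp
    then show ?thesis using s_root s_alpha e(2) by (intro bexI[of _ s]) simp_all
  qed
qed

theorem lemma2p5:
  fixes R :: "'a::euclidean_space set" and \<alpha> \<beta> :: 'a
  assumes "simple_lie_root_system R"
    and "\<alpha> \<in> R" and "\<beta> \<in> R" and "long_root R \<beta>"
    and "\<alpha> \<bullet> \<beta> = 0"
  shows "\<exists>\<gamma>\<in>R. \<exists>\<gamma>'\<in>R. \<gamma> \<notin> {\<alpha>, \<beta>} \<and> \<alpha> + \<beta> = \<gamma> + \<gamma>'"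
proof -
  have red: "reduced_root_system R" and irr: "irreducible_root_system R"
    using assms(1) simple_lie_root_system_def by auto
  have rs: "root_system R" using red reduced_root_system_def by blast
  obtain d where d: "d \<in> R" "d \<bullet> \<alpha> > 0" "d \<bullet> \<beta> < 0"
    using irreducible_common_nonorthogonal[OF irr assms(2,3)]
      acute_obtuse_root[OF rs assms(3,5)] by blast
  have "\<alpha> \<bullet> d > 0" "\<alpha> \<noteq> d" using d assms(5) by (auto simp: inner_commute)
  then have \<gamma>: "\<alpha> - d \<in> R" by (rule diff_root_mem[OF red assms(2) d(1)])
  have "\<beta> \<bullet> (- d) > 0" using d(3) by (simp add: inner_commute[of \<beta> d])
  moreover have "\<beta> \<noteq> - d" using d(2) assms(5) by (auto simp: inner_commute[of d \<alpha>])
  ultimately have \<gamma>': "\<beta> - (- d) \<in> R"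
    by (rule diff_root_mem[OF red assms(3) root_uminus_mem[OF rs d(1)]])
  have "\<alpha> - d \<noteq> \<alpha>" using root_inner_self_pos[OF rs d(1)] by auto
  moreover have "\<alpha> - d \<noteq> \<beta>"
  proof
    assume "\<alpha> - d = \<beta>"
    then have "d = \<alpha> - \<beta>" by (simp add: algebra_simps)
    then have "d \<bullet> d = \<alpha> \<bullet> \<alpha> + \<beta> \<bullet> \<beta>"
      using assms(5) by (simp add: inner_diff_left inner_diff_right inner_commute[of \<beta> \<alpha>])
    moreover have "d \<bullet> d \<le> \<beta> \<bullet> \<beta>" using assms(4) d(1) unfolding long_root_def by blast
    ultimately show False using root_inner_self_pos[OF rs assms(2)] by simp
  qed
  moreover have "\<alpha> + \<beta> = (\<alpha> - d) + (\<beta> - (- d))" by simp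
  ultimately show ?thesis using \<gamma> \<gamma>' by blast
qed

end
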